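(* Let $\phi\in L^\infty$. The (compressed) slant Toeplitz operator $B_\phi$ on $H^2$ is a slant H-Toeplitz operator (i.e. $B_\phi=V_\psi$ for some $\psi\in L^\infty$) if and only if $\phi=0$.
   Context: $L^2=L^2(\mathbb{T})$ with orthonormal basis $e_n(z)=z^n$, $n\in\mathbb{Z}$; $H^2$ is the closed span of $\{e_n\}_{n\ge0}$, $P:L^2\to H^2$ the orthogonal projection, $M_\phi$ multiplication by $\phi$. $W:L^2\to L^2$: $We_n=e_{n/2}$ for $n$ even, $0$ for $n$ odd. $B_\phi=PWM_\phi|_{H^2}$ (which equals $WT_\phi$, $T_\phi=PM_\phi|_{H^2}$). $K:H^2\to L^2$: $Ke_{2n}=e_n$, $Ke_{2n+1}=e_{-n-1}$ ($n\ge0$). The slant H-Toeplitz operator with symbol $\psi\in L^\infty$ is $V_\psi=WPM_\psi K:H^2\to H^2$. *)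

theory Defs
  imports "HOL-Analysis.Analysis"
begin

text \<open>The unit circle is parametrised by t in [0, 2 pi] via cis t, with normalised
Lebesgue measure. A symbol is a function phi :: complex => complex, considered on the circle.\<close>

definition circ_meas :: "real measure" where
  "circ_meas = lebesgue_on {0..2*pi}"

definition Linf :: "(complex \<Rightarrow> complex) \<Rightarrow> bool" where
  "Linf \<phi> \<longleftrightarrow> (\<lambda>t. \<phi> (cis t)) \<in> borel_measurable circ_meas
      \<and> (\<exists>C. AE t in circ_meas. norm (\<phi> (cis t)) \<le> C)"

definition fourier :: "(complex \<Rightarrow> complex) \<Rightarrow> int \<Rightarrow> complex" where
  "fourier \<phi> n = complex_of_real (1 / (2*pi)) *
      integral\<^sup>L circ_meas (\<lambda>t. \<phi> (cis t) * cis (- (of_int n * t)))"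

text \<open>L^2 is identified (via the orthonormal basis e_n) with square-summable coefficient
sequences; H^2 consists of those with vanishing negative coefficients.\<close>
definition L2 :: "(int \<Rightarrow> complex) set" where
  "L2 = {c. (\<lambda>n. (norm (c n))\<^sup>2) summable_on UNIV}"

definition H2 :: "(int \<Rightarrow> complex) set" where
  "H2 = {c \<in> L2. \<forall>n<0. c n = 0}"

text \<open>Multiplication by phi in coefficient form: (phi f)^(n) = sum_k phi^(n-k) f^(k).\<close>
definition Mult :: "(complex \<Rightarrow> complex) \<Rightarrow> (int \<Rightarrow> complex) \<Rightarrow> (int \<Rightarrow> complex)" where
  "Mult \<phi> c = (\<lambda>n. \<Sum>\<^sub>\<infinity>k. fourier \<phi> (n - k) * c k)"

definition Proj :: "(int \<Rightarrow> complex) \<Rightarrow> (int \<Rightarrow> complex)" where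
  "Proj c = (\<lambda>n. if n \<ge> 0 then c n else 0)"

text \<open>W e_n = e_{n/2} (n even), 0 (n odd).\<close>
definition Wop :: "(int \<Rightarrow> complex) \<Rightarrow> (int \<Rightarrow> complex)" where
  "Wop c = (\<lambda>n. c (2*n))"

text \<open>K e_{2n} = e_n, K e_{2n+1} = e_{-n-1} (n >= 0).\<close>
definition Kop :: "(int \<Rightarrow> complex) \<Rightarrow> (int \<Rightarrow> complex)" where
  "Kop c = (\<lambda>n. if n \<ge> 0 then c (2*n) else c (-2*n - 1))"

definition slantB :: "(complex \<Rightarrow> complex) \<Rightarrow> (int \<Rightarrow> complex) \<Rightarrow> (int \<Rightarrow> complex)" where
  "slantB \<phi> c = Proj (Wop (Mult \<phi> c))"

definition slantHV :: "(complex \<Rightarrow> complex) \<Rightarrow> (int \<Rightarrow> complex) \<Rightarrow> (int \<Rightarrow> complex)" where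
  "slantHV \<psi> c = Wop (Proj (Mult \<psi> (Kop c)))"

end

theory Submission
  imports Defs
begin

text \<open>Testing \<open>B_phi = V_psi\<close> on the basis vectors \<open>e_j\<close> of \<open>H^2\<close> gives
\<open>phi^(2n - 2i) = psi^(2n - i)\<close> and \<open>phi^(2n - 2i - 1) = psi^(2n + i + 1)\<close> for all
\<open>n, i >= 0\<close>. Eliminating \<open>psi\<close>, the even Fourier coefficients of \<open>phi\<close> are constant
and the odd ones are periodic with period 6, so every Fourier coefficient of
\<open>phi(z) (1 - z^2) (1 - z^6)\<close> vanishes. Fourier coefficients determine an integrable
function on the circle (trigonometric polynomials are uniformly dense in the continuous
functions by Stone-Weierstrass, continuous functions approximate indicators of arcs
boundedly, and a function whose integrals over all half-lines vanish is zero a.e.), hence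
\<open>phi (1 - z^2) (1 - z^6) = 0\<close> a.e. and so \<open>phi = 0\<close> a.e.\<close>

lemma integrable_mult_bounded:
  fixes f g :: "'a \<Rightarrow> complex"
  assumes f: "integrable M f" and g: "g \<in> borel_measurable M" and bound: "\<And>t. norm (g t) \<le> B"
  shows "integrable M (\<lambda>t. f t * g t)"
proof (rule Bochner_Integration.integrable_bound[where f = "\<lambda>t. B *\<^sub>R f t"])
  show "integrable M (\<lambda>t. B *\<^sub>R f t)" using f by simp
  show "(\<lambda>t. f t * g t) \<in> borel_measurable M" using f g by simp
  have "0 \<le> B" using bound[of undefined] norm_ge_zero order_trans by blast
  then have "norm (f t * g t) \<le> norm (B *\<^sub>R f t)" for t
    using mult_left_mono[OF bound[of t] norm_ge_zero[of "f t"]]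
    by (metis abs_of_nonneg mult.commute norm_mult norm_scaleR)
  then show "AE t in M. norm (f t * g t) \<le> norm (B *\<^sub>R f t)" by simp
qed

lemma norm_integral_mult_bounded_le:
  fixes f g :: "'a \<Rightarrow> complex"
  assumes f: "integrable M f" and g: "g \<in> borel_measurable M" and bound: "\<And>t. norm (g t) \<le> B"
  shows "norm (\<integral>t. f t * g t \<partial>M) \<le> B * (\<integral>t. norm (f t) \<partial>M)"
proof -
  have "norm (\<integral>t. f t * g t \<partial>M) \<le> (\<integral>t. norm (f t * g t) \<partial>M)"
    by (rule integral_norm_bound)
  also have "\<dots> \<le> (\<integral>t. B * norm (f t) \<partial>M)"
  proof (rule integral_mono)
    show "integrable M (\<lambda>t. norm (f t * g t))"
      using integrable_mult_bounded[OF assms] by (rule integrable_norm)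
    show "norm (f t * g t) \<le> B * norm (f t)" for t
      using mult_right_mono[OF bound[of t], of "norm (f t)"] by (simp add: norm_mult mult.commute)
  qed (use f in simp)
  finally show ?thesis by simp
qed

lemma nn_integral_pos_part_eq_neg_part:
  fixes g :: "'a \<Rightarrow> real"
  assumes g: "integrable M g" and zero: "(\<integral>t. g t \<partial>M) = 0"
  shows "(\<integral>\<^sup>+t. ennreal (g t) \<partial>M) = (\<integral>\<^sup>+t. ennreal (- g t) \<partial>M)"
proof -
  from g have fin: "(\<integral>\<^sup>+t. ennreal (g t) \<partial>M) < top" "(\<integral>\<^sup>+t. ennreal (- g t) \<partial>M) < top"
    unfolding real_integrable_def by (auto simp: less_top)
  have "enn2real (\<integral>\<^sup>+t. ennreal (g t) \<partial>M) = enn2real (\<integral>\<^sup>+t. ennreal (- g t) \<partial>M)"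
    using real_lebesgue_integral_def[OF g] zero by linarith
  then have "ennreal (enn2real (\<integral>\<^sup>+t. ennreal (g t) \<partial>M)) = ennreal (enn2real (\<integral>\<^sup>+t. ennreal (- g t) \<partial>M))"
    by (rule arg_cong)
  then show ?thesis
    unfolding ennreal_enn2real[OF fin(1)] ennreal_enn2real[OF fin(2)] .
qed

lemma AE_zero_if_integrals_Ioi_zero:
  fixes g :: "real \<Rightarrow> real"
  assumes g: "integrable lborel g"
    and zero: "\<And>x. (\<integral>t. g t * indicator {x<..} t \<partial>lborel) = 0"
  shows "AE t in lborel. g t = 0"
proof -
  have [measurable]: "g \<in> borel_measurable borel" using g by simp
  have emeasure_Ioi: "emeasure (density lborel (\<lambda>t. ennreal (h t))) {x<..}
      = (\<integral>\<^sup>+t. ennreal (h t * indicator {x<..} t) \<partial>lborel)"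
    if "h \<in> borel_measurable borel" for h :: "real \<Rightarrow> real" and x
    using that by (subst emeasure_density) (auto intro!: nn_integral_cong split: split_indicator)
  have g_Ioi: "integrable lborel (\<lambda>t. g t * indicator {x<..} t)" for x
    using integrable_real_mult_indicator[of "{x<..}" lborel g] g by (simp add: mult.commute)
  have "density lborel (\<lambda>t. ennreal (g t)) = density lborel (\<lambda>t. ennreal (- g t))"
  proof (rule measure_eqI_lessThan)
    fix x
    show "emeasure (density lborel (\<lambda>t. ennreal (g t))) {x<..} < \<infinity>"
      using g_Ioi[of x] unfolding emeasure_Ioi[OF \<open>g \<in> borel_measurable borel\<close>] real_integrable_def
      by (simp add: less_top)
    show "emeasure (density lborel (\<lambda>t. ennreal (g t))) {x<..}
        = emeasure (density lborel (\<lambda>t. ennreal (- g t))) {x<..}"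
      using nn_integral_pos_part_eq_neg_part[OF g_Ioi zero]
      by (simp add: emeasure_Ioi)
  qed simp_all
  then have "AE t in lborel. ennreal (g t) = ennreal (- g t)"
    by (intro sigma_finite_measure.density_unique[OF sigma_finite_lborel]) measurable
  then show ?thesis
    by eventually_elim (metis ennreal_eq_0_iff ennreal_neg linorder_le_cases neg_le_0_iff_le order_antisym)
qed

lemma AE_lebesgue_zero_if_integrals_Ioi_zero:
  fixes g :: "real \<Rightarrow> real"
  assumes g: "integrable lebesgue g"
    and zero: "\<And>x. (\<integral>t. g t * indicator {x<..} t \<partial>lebesgue) = 0"
  shows "AE t in lebesgue. g t = 0"
proof -
  obtain g' where g'_meas: "g' \<in> borel_measurable lborel" and g_g'_lborel: "AE t in lborel. g t = g' t"
    using completion_ex_borel_measurable_real[of g lborel] g by auto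
  have g_g': "AE t in lebesgue. g t = g' t" using g_g'_lborel by (rule AE_completion)
  have g'_lebesgue: "integrable lebesgue g'"
    using g integrable_cong_AE[OF _ measurable_completion[OF g'_meas] g_g'] by simp
  have "AE t in lborel. g' t = 0"
  proof (rule AE_zero_if_integrals_Ioi_zero)
    show "integrable lborel g'"
      using g'_lebesgue integrable_completion[OF g'_meas] by simp
    fix x
    have Ioi_meas: "(indicator {x<..} :: real \<Rightarrow> real) \<in> borel_measurable lebesgue"
      by (intro measurable_completion) simp
    have "(\<integral>t. g' t * indicator {x<..} t \<partial>lborel) = (\<integral>t. g' t * indicator {x<..} t \<partial>lebesgue)"
      using g'_meas by (intro integral_completion[symmetric]) simp
    also have "\<dots> = (\<integral>t. g t * indicator {x<..} t \<partial>lebesgue)"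
      using borel_measurable_integrable[OF g] borel_measurable_integrable[OF g'_lebesgue] g_g' Ioi_meas
      by (intro integral_cong_AE borel_measurable_times) (auto elim!: eventually_mono)
    finally show "(\<integral>t. g' t * indicator {x<..} t \<partial>lborel) = 0" using zero by simp
  qed
  then have "AE t in lebesgue. g' t = 0" by (rule AE_completion)
  with g_g' show ?thesis by eventually_elim simp
qed

lemma AE_lebesgue_on_zero_if_integrals_Ioi_zero:
  fixes f :: "real \<Rightarrow> complex"
  assumes S: "S \<in> sets lebesgue" and f: "integrable (lebesgue_on S) f"
    and Ioi_zero: "\<And>x. (\<integral>t. f t * indicator {x<..} t \<partial>lebesgue_on S) = 0"
  shows "AE t in lebesgue_on S. f t = 0"
proof -
  have component: "AE t in lebesgue_on S. L (f t) = 0" if L: "bounded_linear L" for L :: "complex \<Rightarrow> real"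
  proof -
    interpret bounded_linear L by (fact L)
    have L_indicator: "L (f t * indicator A t) = L (f t) * indicator A t" for t A
      by (simp split: split_indicator)
    have "AE t in lebesgue. indicator S t * L (f t) = 0"
    proof (rule AE_lebesgue_zero_if_integrals_Ioi_zero)
      show "integrable lebesgue (\<lambda>t. indicator S t * L (f t))"
        using integrable_bounded_linear[OF L f] S by (simp add: integrable_restrict_space)
      fix x
      have "(indicator {x<..} :: real \<Rightarrow> complex) \<in> borel_measurable (lebesgue_on S)"
        by (intro measurable_restrict_space1 measurable_completion) simp
      then have f_Ioi: "integrable (lebesgue_on S) (\<lambda>t. f t * indicator {x<..} t)"
        by (rule integrable_mult_bounded[OF f, where B = 1]) (simp split: split_indicator)
      have "(\<integral>t. indicator S t * L (f t) * indicator {x<..} t \<partial>lebesgue)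
          = (\<integral>t. L (f t * indicator {x<..} t) \<partial>lebesgue_on S)"
        using S by (simp add: integral_restrict_space L_indicator mult.assoc)
      also have "\<dots> = L (\<integral>t. f t * indicator {x<..} t \<partial>lebesgue_on S)"
        using f_Ioi by (rule integral_bounded_linear[OF L])
      finally show "(\<integral>t. indicator S t * L (f t) * indicator {x<..} t \<partial>lebesgue) = 0"
        using Ioi_zero[of x] by simp
    qed
    then show ?thesis
      using S by (subst AE_restrict_space_iff) (auto elim!: eventually_mono)
  qed
  from component[OF bounded_linear_Re] component[OF bounded_linear_Im]
  show ?thesis by eventually_elim (simp add: complex_eq_iff)
qed

lemma continuous_on_imp_measurable_circ_meas:
  fixes T :: "real \<Rightarrow> 'b::{real_normed_vector, second_countable_topology}"
  shows "continuous_on UNIV T \<Longrightarrow> T \<in> borel_measurable circ_meas"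
  unfolding circ_meas_def
  by (rule continuous_imp_measurable_on_sets_lebesgue) (auto intro: continuous_on_subset)

lemma AE_circ_meas_not_in_countable:
  assumes "countable X"
  shows "AE t in circ_meas. t \<notin> X"
proof -
  have "AE t in lborel. t \<notin> X"
    using countable_imp_null_set_lborel[OF assms] by (rule AE_not_in)
  then have "AE t in lebesgue. t \<notin> X" by (rule AE_completion)
  then show ?thesis
    unfolding circ_meas_def by (subst AE_restrict_space_iff) (auto elim!: eventually_mono)
qed

inductive trig_poly :: "(real \<Rightarrow> complex) \<Rightarrow> bool" where
  trig_poly_monomial: "trig_poly (\<lambda>t. c * cis (of_int k * t))"
| trig_poly_add: "trig_poly f \<Longrightarrow> trig_poly g \<Longrightarrow> trig_poly (\<lambda>t. f t + g t)"

lemma trig_poly_continuous: "trig_poly T \<Longrightarrow> continuous_on UNIV T"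
proof (induction rule: trig_poly.induct)
  case (trig_poly_monomial c k)
  have "continuous_on UNIV (\<lambda>t. c * exp (\<i> * complex_of_real (of_int k * t)))"
    by (intro continuous_intros)
  then show ?case by (simp add: cis_conv_exp)
qed (intro continuous_intros)

lemma trig_poly_bounded: "trig_poly T \<Longrightarrow> \<exists>B. \<forall>t. norm (T t) \<le> B"
proof (induction rule: trig_poly.induct)
  case (trig_poly_add f g)
  then obtain B1 B2 where "\<forall>t. norm (f t) \<le> B1" "\<forall>t. norm (g t) \<le> B2" by blast
  then have "\<forall>t. norm (f t + g t) \<le> B1 + B2" by (meson add_mono norm_triangle_ineq order_trans)
  then show ?case by blast
qed (auto simp: norm_mult)

lemma trig_poly_mult: "trig_poly f \<Longrightarrow> trig_poly g \<Longrightarrow> trig_poly (\<lambda>t. f t * g t)"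
proof (induction f rule: trig_poly.induct)
  case (trig_poly_monomial c k)
  then show ?case
  proof (induction g rule: trig_poly.induct)
    case (trig_poly_monomial d j)
    have "(\<lambda>t. c * cis (of_int k * t) * (d * cis (of_int j * t))) = (\<lambda>t. (c * d) * cis (of_int (k + j) * t))"
      by (auto simp: cis_mult algebra_simps)
    then show ?case using trig_poly.trig_poly_monomial[of "c * d" "k + j"] by simp
  qed (simp add: distrib_left trig_poly.trig_poly_add)
qed (simp add: distrib_right trig_poly.trig_poly_add)

lemma trig_poly_real_polynomial:
  "real_polynomial_function p \<Longrightarrow> trig_poly (\<lambda>t. complex_of_real (p (cis t)))"
proof (induction rule: real_polynomial_function.induct)
  case (linear p)
  then interpret bounded_linear p .
  have "p (cis t) = p 1 * cos t + p \<i> * sin t" for t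
  proof -
    have "cis t = cos t *\<^sub>R 1 + sin t *\<^sub>R \<i>" by (simp add: complex_eq_iff)
    then show ?thesis by (simp add: add scale mult.commute)
  qed
  then have "(\<lambda>t. complex_of_real (p (cis t))) = (\<lambda>t.
      ((p 1 - \<i> * p \<i>) / 2) * cis (of_int 1 * t) + ((p 1 + \<i> * p \<i>) / 2) * cis (of_int (-1) * t))"
    by (auto simp: fun_eq_iff complex_eq_iff field_simps)
  then show ?case by (simp only:) (intro trig_poly.intros)
next
  case (const c)
  then show ?case using trig_poly_monomial[of c 0] by simp
qed (simp_all add: trig_poly_add trig_poly_mult)

lemma integrable_mult_trig_poly:
  "integrable circ_meas f \<Longrightarrow> trig_poly T \<Longrightarrow> integrable circ_meas (\<lambda>t. f t * T t)"
  by (metis integrable_mult_bounded trig_poly_bounded trig_poly_continuous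
      continuous_on_imp_measurable_circ_meas)

lemma integral_mult_trig_poly_eq_0:
  assumes f: "integrable circ_meas f"
    and orth: "\<And>n::int. (\<integral>t. f t * cis (- (of_int n * t)) \<partial>circ_meas) = 0"
    and T: "trig_poly T"
  shows "(\<integral>t. f t * T t \<partial>circ_meas) = 0"
  using T
proof (induction rule: trig_poly.induct)
  case (trig_poly_monomial c k)
  have "(\<lambda>t. f t * (c * cis (of_int k * t))) = (\<lambda>t. c * (f t * cis (- (of_int (-k) * t))))"
    by (auto simp: algebra_simps)
  then show ?case using orth[of "-k"] by simp
next
  case (trig_poly_add g h)
  have "integrable circ_meas (\<lambda>t. f t * g t)" "integrable circ_meas (\<lambda>t. f t * h t)"
    using trig_poly_add.hyps f integrable_mult_trig_poly by blast+
  then show ?case using trig_poly_add.IH by (simp add: distrib_left)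
qed

lemma integral_mult_continuous_eq_0:
  fixes h :: "complex \<Rightarrow> real"
  assumes f: "integrable circ_meas f"
    and orth: "\<And>n::int. (\<integral>t. f t * cis (- (of_int n * t)) \<partial>circ_meas) = 0"
    and h: "continuous_on UNIV h"
  shows "(\<integral>t. f t * of_real (h (cis t)) \<partial>circ_meas) = 0"
proof -
  define K where "K = (\<integral>t. norm (f t) \<partial>circ_meas)"
  have "K \<ge> 0" unfolding K_def by simp
  have "norm (\<integral>t. f t * of_real (h (cis t)) \<partial>circ_meas) \<le> 0 + e" if "e > 0" for e
  proof -
    define d where "d = e / (K + 1)"
    have "d > 0" using \<open>e > 0\<close> \<open>K \<ge> 0\<close> by (simp add: d_def)
    obtain p where p: "polynomial_function p" "\<forall>z\<in>sphere 0 1. norm (h z - p z) < d"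
      using Stone_Weierstrass_polynomial_function[OF compact_sphere continuous_on_subset[OF h] \<open>d > 0\<close>]
      by blast
    have p_trig: "trig_poly (\<lambda>t. of_real (p (cis t)))"
      using trig_poly_real_polynomial p(1) real_polynomial_function_eq by blast
    define r where "r t = complex_of_real (h (cis t) - p (cis t))" for t
    have hp_cont: "continuous_on UNIV (\<lambda>z. h z - p z)"
      using h continuous_on_polymonial_function[OF p(1)] by (intro continuous_intros)
    have r_meas: "r \<in> borel_measurable circ_meas"
      unfolding r_def
      by (intro continuous_on_imp_measurable_circ_meas continuous_intros
          continuous_on_compose2[OF hp_cont]) auto
    have r_small: "norm (r t) \<le> d" for t
      using p(2) unfolding r_def norm_of_real by (simp add: less_imp_le)
    have "(\<integral>t. f t * of_real (h (cis t)) \<partial>circ_meas)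
        = (\<integral>t. f t * r t + f t * of_real (p (cis t)) \<partial>circ_meas)"
      by (simp add: r_def algebra_simps)
    also have "\<dots> = (\<integral>t. f t * r t \<partial>circ_meas)"
      using integrable_mult_bounded[OF f r_meas r_small] integrable_mult_trig_poly[OF f p_trig]
        integral_mult_trig_poly_eq_0[OF f orth p_trig] by simp
    finally have "norm (\<integral>t. f t * of_real (h (cis t)) \<partial>circ_meas) \<le> d * K"
      unfolding K_def using norm_integral_mult_bounded_le[OF f r_meas r_small] by simp
    also have "\<dots> \<le> e"
      using \<open>e > 0\<close> \<open>K \<ge> 0\<close> by (simp add: d_def field_simps)
    finally show ?thesis by simp
  qed
  then show ?thesis using field_le_epsilon[of "norm (\<integral>t. f t * of_real (h (cis t)) \<partial>circ_meas)" 0] by simp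
qed

lemma cos_gt_iff_in_arc:
  fixes x t :: real
  assumes "0 \<le> x" "x < 2*pi" "0 \<le> t" "t < 2*pi"
  shows "cos (t - (pi + x/2)) > cos (pi - x/2) \<longleftrightarrow> x < t"
proof
  assume "x < t"
  then have "\<bar>t - (pi + x/2)\<bar> < pi - x/2" using assms by auto
  then have "cos (pi - x/2) < cos \<bar>t - (pi + x/2)\<bar>"
    using assms by (intro cos_monotone_0_pi) auto
  then show "cos (t - (pi + x/2)) > cos (pi - x/2)" by simp
next
  assume gt: "cos (t - (pi + x/2)) > cos (pi - x/2)"
  show "x < t"
  proof (rule ccontr)
    assume "\<not> x < t"
    show False
    proof (cases "t - (pi + x/2) \<ge> -pi")
      case True
      have "cos \<bar>t - (pi + x/2)\<bar> \<le> cos (pi - x/2)"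
        using True \<open>\<not> x < t\<close> assms by (intro cos_monotone_0_pi_le) auto
      then show False using gt by simp
    next
      case False
      have "cos (t - (pi + x/2) + 2*pi) \<le> cos (pi - x/2)"
        using False \<open>\<not> x < t\<close> assms by (intro cos_monotone_0_pi_le) auto
      then show False using gt by (simp only: cos_periodic)
    qed
  qed
qed

lemma arc_indicator_approximation:
  assumes x: "0 \<le> x" "x < 2*pi"
  obtains h :: "nat \<Rightarrow> complex \<Rightarrow> real"
  where "\<And>n. continuous_on UNIV (h n)" "\<And>n z. \<bar>h n z\<bar> \<le> 1"
    "\<And>t. 0 \<le> t \<Longrightarrow> t < 2*pi \<Longrightarrow> (\<lambda>n. h n (cis t)) \<longlonglongrightarrow> indicator {x<..} t"
proof
  define a where "a = pi + x/2"
  define c where "c = cos (pi - x/2)"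
  \<comment> \<open>the arc \<open>{cis t | x < t < 2 pi}\<close> is centred at \<open>cis a\<close> with angular radius \<open>pi - x/2\<close>;
    \<open>h n\<close> is a continuous cut-off of it\<close>
  define h where "h n z = max 0 (min 1 (real n * (Re (z * cnj (cis a)) - c)))" for n z
  show "continuous_on UNIV (h n)" for n
    unfolding h_def by (intro continuous_intros)
  show "\<bar>h n z\<bar> \<le> 1" for n z
    unfolding h_def by simp
  fix t :: real
  assume t: "0 \<le> t" "t < 2*pi"
  have h_cis: "h n (cis t) = max 0 (min 1 (real n * (cos (t - a) - c)))" for n
    unfolding h_def by (simp add: cis_cnj cis_mult)
  have in_arc: "cos (t - a) - c > 0 \<longleftrightarrow> x < t"
    using cos_gt_iff_in_arc[OF x t] unfolding a_def c_def by linarith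
  show "(\<lambda>n. h n (cis t)) \<longlonglongrightarrow> indicator {x<..} t"
  proof (cases "x < t")
    case True
    then have d: "cos (t - a) - c > 0" using in_arc by simp
    obtain N :: nat where N: "1 < real N * (cos (t - a) - c)"
      using ex_less_of_nat_mult[OF d] by blast
    have "h n (cis t) = 1" if "N \<le> n" for n
      using N mult_right_mono[of "real N" "real n", OF _ less_imp_le[OF d]] that
      unfolding h_cis by simp
    then have "eventually (\<lambda>n. h n (cis t) = indicator {x<..} t) sequentially"
      using True eventually_sequentially by auto
    then show ?thesis by (rule tendsto_eventually)
  next
    case False
    then have "cos (t - a) - c \<le> 0" using in_arc by simp
    then have "h n (cis t) = 0" for n
      unfolding h_cis using mult_nonneg_nonpos[of "real n" "cos (t - a) - c"] by simp
    then show ?thesis using False by simp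
  qed
qed

lemma integral_mult_indicator_arc_eq_0:
  assumes f: "integrable circ_meas f"
    and orth: "\<And>n::int. (\<integral>t. f t * cis (- (of_int n * t)) \<partial>circ_meas) = 0"
    and x: "0 \<le> x" "x < 2*pi"
  shows "(\<integral>t. f t * indicator {x<..} t \<partial>circ_meas) = 0"
proof -
  obtain h :: "nat \<Rightarrow> complex \<Rightarrow> real"
    where h_cont: "\<And>n. continuous_on UNIV (h n)" and h_bound: "\<And>n z. \<bar>h n z\<bar> \<le> 1"
    and h_lim: "\<And>t. 0 \<le> t \<Longrightarrow> t < 2*pi \<Longrightarrow> (\<lambda>n. h n (cis t)) \<longlonglongrightarrow> indicator {x<..} t"
    using arc_indicator_approximation[OF x] by blast
  have h_meas: "(\<lambda>t. complex_of_real (h n (cis t))) \<in> borel_measurable circ_meas" for n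
    by (intro continuous_on_imp_measurable_circ_meas continuous_intros
        continuous_on_compose2[OF h_cont]) auto
  have Ioi_meas: "(indicator {x<..} :: real \<Rightarrow> complex) \<in> borel_measurable circ_meas"
    unfolding circ_meas_def by (intro measurable_restrict_space1 measurable_completion) simp
  \<comment> \<open>at \<open>t = 2 pi\<close> the cut-offs see \<open>cis 0\<close> and tend to 0, not to the indicator\<close>
  have not_2pi: "AE t in circ_meas. t \<notin> {2*pi}"
    by (rule AE_circ_meas_not_in_countable) simp
  have "(\<lambda>n. \<integral>t. f t * of_real (h n (cis t)) \<partial>circ_meas) \<longlonglongrightarrow> (\<integral>t. f t * indicator {x<..} t \<partial>circ_meas)"
  proof (rule integral_dominated_convergence)
    show "AE t in circ_meas. (\<lambda>n. f t * of_real (h n (cis t))) \<longlonglongrightarrow> f t * indicator {x<..} t"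
      using not_2pi AE_space
    proof eventually_elim
      case (elim t)
      then have "(\<lambda>n. complex_of_real (h n (cis t))) \<longlonglongrightarrow> of_real (indicator {x<..} t)"
        by (intro tendsto_of_real h_lim) (auto simp: circ_meas_def)
      moreover have "of_real (indicator {x<..} t) = (indicator {x<..} t :: complex)"
        by (simp split: split_indicator)
      ultimately show ?case by (simp add: tendsto_mult_left)
    qed
    show "AE t in circ_meas. norm (f t * of_real (h n (cis t))) \<le> norm (f t)" for n
      using h_bound by (intro AE_I2) (simp add: norm_mult mult_left_le)
  qed (use f h_meas Ioi_meas in simp_all)
  moreover have "(\<integral>t. f t * of_real (h n (cis t)) \<partial>circ_meas) = 0" for n
    using integral_mult_continuous_eq_0[OF f orth h_cont] .
  ultimately have "(\<lambda>n. 0) \<longlonglongrightarrow> (\<integral>t. f t * indicator {x<..} t \<partial>circ_meas)"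
    by simp
  then show ?thesis by (simp add: LIMSEQ_const_iff)
qed

lemma integral_mult_indicator_Ioi_eq_0:
  assumes f: "integrable circ_meas f"
    and orth: "\<And>n::int. (\<integral>t. f t * cis (- (of_int n * t)) \<partial>circ_meas) = 0"
  shows "(\<integral>t. f t * indicator {x<..} t \<partial>circ_meas) = 0"
proof -
  consider "x < 0" | "2*pi \<le> x" | "0 \<le> x" "x < 2*pi" by linarith
  then show ?thesis
  proof cases
    case 1
    then have "(\<integral>t. f t * indicator {x<..} t \<partial>circ_meas) = (\<integral>t. f t * cis (- (of_int 0 * t)) \<partial>circ_meas)"
      by (intro Bochner_Integration.integral_cong) (auto simp: circ_meas_def)
    then show ?thesis using orth[of 0] by simp
  next
    case 2
    then have "(\<integral>t. f t * indicator {x<..} t \<partial>circ_meas) = (\<integral>t. 0 \<partial>circ_meas)"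
      by (intro Bochner_Integration.integral_cong) (auto simp: circ_meas_def)
    then show ?thesis by simp
  next
    case 3
    then show ?thesis by (rule integral_mult_indicator_arc_eq_0[OF f orth])
  qed
qed

lemma AE_zero_if_fourier_integrals_zero:
  assumes f: "integrable circ_meas f"
    and orth: "\<And>n::int. (\<integral>t. f t * cis (- (of_int n * t)) \<partial>circ_meas) = 0"
  shows "AE t in circ_meas. f t = 0"
  using AE_lebesgue_on_zero_if_integrals_Ioi_zero[of "{0..2*pi}" f]
    f integral_mult_indicator_Ioi_eq_0[OF f orth]
  unfolding circ_meas_def by simp

lemma Linf_integrable: "Linf \<phi> \<Longrightarrow> integrable circ_meas (\<lambda>t. \<phi> (cis t))"
proof -
  assume "Linf \<phi>"
  then obtain C where meas: "(\<lambda>t. \<phi> (cis t)) \<in> borel_measurable circ_meas"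
    and bound: "AE t in circ_meas. norm (\<phi> (cis t)) \<le> C"
    unfolding Linf_def by blast
  have "finite_measure circ_meas"
    unfolding circ_meas_def by (rule finite_measure_lebesgue_on) simp
  from finite_measure.integrable_const_bound[OF this bound meas] show ?thesis .
qed

lemma AE_zero_if_fourier_eq_0:
  assumes "integrable circ_meas (\<lambda>t. \<phi> (cis t))" and "\<And>n. fourier \<phi> n = 0"
  shows "AE t in circ_meas. \<phi> (cis t) = 0"
  using assms by (intro AE_zero_if_fourier_integrals_zero) (simp_all add: fourier_def)

lemma fourier_eq_0_if_AE_zero:
  assumes "AE t in circ_meas. \<phi> (cis t) = 0"
  shows "fourier \<phi> n = 0"
proof -
  have "AE t in circ_meas. \<phi> (cis t) * cis (- (of_int n * t)) = 0"
    using assms by eventually_elim simp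
  then show ?thesis unfolding fourier_def by (simp add: integral_eq_zero_AE)
qed

lemma integrable_mult_one_minus_cis_power:
  assumes "integrable circ_meas (\<lambda>t. \<phi> (cis t))"
  shows "integrable circ_meas (\<lambda>t. \<phi> (cis t) * (1 - cis t ^ m))"
proof (rule integrable_mult_bounded[OF assms, where B = 2])
  show "(\<lambda>t. 1 - cis t ^ m) \<in> borel_measurable circ_meas"
    by (intro continuous_on_imp_measurable_circ_meas continuous_intros)
  show "norm (1 - cis t ^ m) \<le> 2" for t
    using norm_triangle_ineq4[of 1 "cis t ^ m"] by (simp add: norm_power)
qed

lemma fourier_mult_one_minus_power:
  assumes "integrable circ_meas (\<lambda>t. \<phi> (cis t))"
  shows "fourier (\<lambda>z. \<phi> z * (1 - z ^ m)) n = fourier \<phi> n - fourier \<phi> (n - int m)"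
proof -
  have shift: "\<phi> (cis t) * (1 - cis t ^ m) * cis (- (of_int n * t))
      = \<phi> (cis t) * cis (- (of_int n * t)) - \<phi> (cis t) * cis (- (of_int (n - int m) * t))" for t
    by (simp add: Complex.DeMoivre cis_mult algebra_simps)
  have integrable: "integrable circ_meas (\<lambda>t. \<phi> (cis t) * cis (- (of_int k * t)))" for k
    using integrable_mult_trig_poly[OF assms trig_poly_monomial[of 1 "- k"]] by simp
  show ?thesis
    unfolding fourier_def shift
    using integrable[of n] integrable[of "n - int m"] by (simp add: diff_divide_distrib)
qed

lemma AE_cis_power_neq_1:
  assumes "m > 0"
  shows "AE t in circ_meas. cis t ^ m \<noteq> 1"
proof -
  have "AE t in circ_meas. t \<notin> range (\<lambda>k::int. 2 * pi * of_int k / real m)"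
    by (rule AE_circ_meas_not_in_countable) simp
  then show ?thesis
  proof eventually_elim
    case (elim t)
    show "cis t ^ m \<noteq> 1"
    proof
      assume "cis t ^ m = 1"
      then have "cis (real m * t) = 1"
        by (simp add: Complex.DeMoivre)
      then have "exp (\<i> * complex_of_real (real m * t)) = 1"
        by (simp add: cis_conv_exp)
      then obtain k :: int where "real m * t = of_int (2 * k) * pi"
        unfolding exp_eq_1 by auto
      then have "t = 2 * pi * of_int k / real m"
        using assms by (simp add: field_simps)
      then show False using elim by auto
    qed
  qed
qed

lemma AE_zero_if_fourier_relations:
  assumes \<phi>: "integrable circ_meas (\<lambda>t. \<phi> (cis t))"
    and even: "\<And>k. fourier \<phi> (2*k) = fourier \<phi> (2*k - 2)"
    and odd: "\<And>k. fourier \<phi> (2*k + 1) = fourier \<phi> (2*k + 7)"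
  shows "AE t in circ_meas. \<phi> (cis t) = 0"
proof -
  define g where "g = (\<lambda>z. \<phi> z * (1 - z ^ 2) * (1 - z ^ 6))"
  have \<phi>2: "integrable circ_meas (\<lambda>t. \<phi> (cis t) * (1 - cis t ^ 2))"
    using integrable_mult_one_minus_cis_power[OF \<phi>] .
  \<comment> \<open>multiplying by \<open>(1 - z^2) (1 - z^6)\<close> kills the constant even part and the
    6-periodic odd part of the Fourier coefficients\<close>
  have "fourier g n = fourier (\<lambda>z. \<phi> z * (1 - z ^ 2)) n - fourier (\<lambda>z. \<phi> z * (1 - z ^ 2)) (n - 6)" for n
    using fourier_mult_one_minus_power[where \<phi> = "\<lambda>z. \<phi> z * (1 - z ^ 2)" and m = 6] \<phi>2
    by (simp add: g_def)
  also have "\<dots> n = (fourier \<phi> n - fourier \<phi> (n - 2)) - (fourier \<phi> (n - 6) - fourier \<phi> (n - 8))" for n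
    using fourier_mult_one_minus_power[OF \<phi>, of 2] by simp
  also have "\<dots> n = 0" for n
  proof (cases "even n")
    case True
    then obtain k where "n = 2*k" by (rule evenE)
    then show ?thesis using even[of k] even[of "k - 3"] by (simp add: algebra_simps)
  next
    case False
    then obtain k where "n = 2*k + 1" by (rule oddE)
    then show ?thesis using odd[of "k - 3"] odd[of "k - 4"] by (simp add: algebra_simps)
  qed
  finally have "AE t in circ_meas. g (cis t) = 0"
    using integrable_mult_one_minus_cis_power[OF \<phi>2]
    by (intro AE_zero_if_fourier_eq_0) (simp_all add: g_def)
  moreover have "AE t in circ_meas. cis t ^ 2 \<noteq> 1" "AE t in circ_meas. cis t ^ 6 \<noteq> 1"
    by (simp_all add: AE_cis_power_neq_1)
  ultimately show ?thesis by eventually_elim (simp add: g_def)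
qed

definition basis_vector :: "int \<Rightarrow> int \<Rightarrow> complex" where
  "basis_vector j = (\<lambda>n. if n = j then 1 else 0)"

lemma basis_vector_in_H2: "0 \<le> j \<Longrightarrow> basis_vector j \<in> H2"
proof -
  assume "0 \<le> j"
  have "(\<lambda>n. (norm (basis_vector j n))\<^sup>2) summable_on UNIV
      \<longleftrightarrow> (\<lambda>n. (norm (basis_vector j n))\<^sup>2) summable_on {j}"
    by (rule summable_on_cong_neutral) (auto simp: basis_vector_def)
  with \<open>0 \<le> j\<close> show ?thesis
    unfolding H2_def L2_def by (auto simp: basis_vector_def)
qed

lemma Mult_basis_vector: "Mult \<phi> (basis_vector j) = (\<lambda>n. fourier \<phi> (n - j))"
proof
  fix n
  have "(\<Sum>\<^sub>\<infinity>k. fourier \<phi> (n - k) * basis_vector j k) = (\<Sum>\<^sub>\<infinity>k\<in>{j}. fourier \<phi> (n - k) * basis_vector j k)"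
    by (rule infsum_cong_neutral) (auto simp: basis_vector_def)
  then show "Mult \<phi> (basis_vector j) n = fourier \<phi> (n - j)"
    unfolding Mult_def by (simp add: basis_vector_def)
qed

lemma Kop_basis_vector_even: "0 \<le> i \<Longrightarrow> Kop (basis_vector (2*i)) = basis_vector i"
  unfolding Kop_def basis_vector_def by (auto simp: fun_eq_iff) presburger+

lemma Kop_basis_vector_odd: "0 \<le> i \<Longrightarrow> Kop (basis_vector (2*i + 1)) = basis_vector (- i - 1)"
  unfolding Kop_def basis_vector_def by (auto simp: fun_eq_iff) presburger+

lemma slantB_basis_vector: "0 \<le> n \<Longrightarrow> slantB \<phi> (basis_vector j) n = fourier \<phi> (2*n - j)"
  unfolding slantB_def Proj_def Wop_def Mult_basis_vector by simp

lemma slantHV_basis_vector_even: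
  "0 \<le> n \<Longrightarrow> 0 \<le> i \<Longrightarrow> slantHV \<psi> (basis_vector (2*i)) n = fourier \<psi> (2*n - i)"
  unfolding slantHV_def Proj_def Wop_def Kop_basis_vector_even Mult_basis_vector by simp

lemma slantHV_basis_vector_odd:
  "0 \<le> n \<Longrightarrow> 0 \<le> i \<Longrightarrow> slantHV \<psi> (basis_vector (2*i + 1)) n = fourier \<psi> (2*n + i + 1)"
  unfolding slantHV_def Proj_def Wop_def Kop_basis_vector_odd Mult_basis_vector
  by (simp add: algebra_simps)

lemma fourier_relations_if_slantB_eq_slantHV:
  assumes eq: "\<forall>c\<in>H2. slantB \<phi> c = slantHV \<psi> c"
  shows "fourier \<phi> (2*k) = fourier \<phi> (2*k - 2)"
    and "fourier \<phi> (2*k + 1) = fourier \<phi> (2*k + 7)"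
proof -
  have even: "fourier \<phi> (2*n - 2*i) = fourier \<psi> (2*n - i)" if "0 \<le> n" "0 \<le> i" for n i
    using eq basis_vector_in_H2[of "2*i"] that
    by (metis mult_nonneg_nonneg zero_le_numeral slantB_basis_vector slantHV_basis_vector_even)
  have odd: "fourier \<phi> (2*n - (2*i + 1)) = fourier \<psi> (2*n + i + 1)" if "0 \<le> n" "0 \<le> i" for n i
    using eq basis_vector_in_H2[of "2*i + 1"] that
    by (metis add_nonneg_nonneg mult_nonneg_nonneg zero_le_numeral zero_le_one
        slantB_basis_vector slantHV_basis_vector_odd)
  \<comment> \<open>two instances of each relation meet at the same coefficient of \<open>\<psi>\<close>\<close>
  define N where "N = max k 0"
  have "fourier \<phi> (2*k) = fourier \<psi> (N + k)"
    using even[of N "N - k"] by (simp add: N_def)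
  moreover have "fourier \<phi> (2*k - 2) = fourier \<psi> (N + k)"
    using even[of "N + 1" "N + 2 - k"] by (simp add: N_def algebra_simps)
  ultimately show "fourier \<phi> (2*k) = fourier \<phi> (2*k - 2)" by simp
  define M where "M = \<bar>k\<bar> + 3"
  have "fourier \<phi> (2*k + 1) = fourier \<psi> (3*M - k)"
    using odd[of M "M - k - 1"] by (simp add: M_def algebra_simps)
  moreover have "fourier \<phi> (2*k + 7) = fourier \<psi> (3*M - k)"
    using odd[of "M + 1" "M - k - 3"] by (simp add: M_def algebra_simps)
  ultimately show "fourier \<phi> (2*k + 1) = fourier \<phi> (2*k + 7)" by simp
qed

lemma Mult_eq_0_if_AE_zero:
  "AE t in circ_meas. \<phi> (cis t) = 0 \<Longrightarrow> Mult \<phi> c = (\<lambda>n. 0)"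
  unfolding Mult_def by (simp add: fourier_eq_0_if_AE_zero)

theorem mainTheorem12:
  fixes \<phi> :: "complex \<Rightarrow> complex"
  assumes "Linf \<phi>"
  shows "(\<exists>\<psi>. Linf \<psi> \<and> (\<forall>c\<in>H2. slantB \<phi> c = slantHV \<psi> c))
         \<longleftrightarrow> (AE t in circ_meas. \<phi> (cis t) = 0)"
proof
  assume "\<exists>\<psi>. Linf \<psi> \<and> (\<forall>c\<in>H2. slantB \<phi> c = slantHV \<psi> c)"
  then obtain \<psi> where "\<forall>c\<in>H2. slantB \<phi> c = slantHV \<psi> c" by blast
  then show "AE t in circ_meas. \<phi> (cis t) = 0"
    using Linf_integrable[OF assms] fourier_relations_if_slantB_eq_slantHV
    by (intro AE_zero_if_fourier_relations) blast+
next
  assume "AE t in circ_meas. \<phi> (cis t) = 0"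
  then have Mult_0: "Mult \<phi> c = (\<lambda>n. 0)" "Mult (\<lambda>z. 0) c = (\<lambda>n. 0)" for c
    by (simp_all add: Mult_eq_0_if_AE_zero)
  have "slantB \<phi> c = slantHV (\<lambda>z. 0) c" for c
    unfolding slantB_def slantHV_def Mult_0 Proj_def Wop_def by simp
  moreover have "Linf (\<lambda>z. 0)"
    unfolding Linf_def by auto
  ultimately show "\<exists>\<psi>. Linf \<psi> \<and> (\<forall>c\<in>H2. slantB \<phi> c = slantHV \<psi> c)" by blast
qed

end
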